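(* Under the hypotheses of the approximate projection proposition ($V$ Hilbert, $Q\subset V$ with $M_Q<\infty$ and $-Q=Q$, $f:V\to\mathbb R^k$ linear with the Johnson–Lindenstrauss property on $Q$ with parameter $\epsilon>0$), let $C_Q:=\inf\{c\in\mathbb R_+:\|\mathbf v\|_Q\le c\|\mathbf v\|\ \text{for all }\mathbf v\in\mathrm{span}\{Q\}\}$. Then for every $\mathbf v\in\mathrm{span}\{Q\}$ such that $(f^*\circ f)(\mathbf v)\in\mathrm{span}\{Q\}$, $$\|(\mathbb I_V-f^*\circ f)(\mathbf v)\|\le\epsilon M_Q^2C_Q^2\|\mathbf v\|.$$
   Context: $M_Q=\sup\{\|\mathbf v\|:\mathbf v\in Q\}$; $\|\mathbf v\|_Q=\inf\{\sum_j|\lambda_j|:\sum_j\lambda_j\mathbf v_j=\mathbf v,\ \mathbf v_j\in Q\}$ over finite combinations. Johnson–Lindenstrauss property with parameter $\epsilon$: $(1-\epsilon)\|\mathbf v_1-\mathbf v_2\|^2\le\|f(\mathbf v_1)-f(\mathbf v_2)\|^2\le(1+\epsilon)\|\mathbf v_1-\mathbf v_2\|^2$ for all $\mathbf v_1,\mathbf v_2\in Q$, the norm on $\mathbb R^k$ being induced by a fixed inner product; $f^*$ is the adjoint of $f$. *)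

theory Defs
  imports "HOL-Analysis.Analysis"
begin

definition MQ :: "'a::real_normed_vector set \<Rightarrow> real" where
  "MQ Q = Sup (norm ` Q)"

definition atomic_norm :: "'a::real_vector set \<Rightarrow> 'a \<Rightarrow> real" where
  "atomic_norm Q v = Inf {(\<Sum>i\<in>I. \<bar>c i\<bar>) | I c u.
      finite (I :: nat set) \<and> (\<forall>i\<in>I. u i \<in> Q) \<and> (\<Sum>i\<in>I. c i *\<^sub>R u i) = v}"

definition JL_property :: "('a::real_normed_vector \<Rightarrow> 'b::real_normed_vector) \<Rightarrow> 'a set \<Rightarrow> real \<Rightarrow> bool" where
  "JL_property f Q eps \<longleftrightarrow> (\<forall>v1\<in>Q. \<forall>v2\<in>Q.
      (1 - eps) * (norm (v1 - v2))\<^sup>2 \<le> (norm (f v1 - f v2))\<^sup>2 \<and>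
      (norm (f v1 - f v2))\<^sup>2 \<le> (1 + eps) * (norm (v1 - v2))\<^sup>2)"

text \<open>C_Q as an extended real (infimum of the empty set is +infinity).\<close>
definition CQ :: "'a::real_normed_vector set \<Rightarrow> ereal" where
  "CQ Q = Inf (ereal ` {c. c \<ge> 0 \<and> (\<forall>v\<in>span Q. atomic_norm Q v \<le> c * norm v)})"

end

theory Submission
  imports Defs
begin

text \<open>
  Put \<open>y = v - f\<^sup>* (f v)\<close>. Since \<open>\<langle>f\<^sup>* (f v), y\<rangle> = \<langle>f v, f y\<rangle>\<close>, we get
  \<open>\<parallel>y\<parallel>\<^sup>2 = B v y\<close> for the bilinear defect \<open>B x z = \<langle>x, z\<rangle> - \<langle>f x, f z\<rangle>\<close>.
  By polarization, the JL inequalities at \<open>u\<^sub>1 - u\<^sub>2\<close> and \<open>u\<^sub>1 + u\<^sub>2\<close> (here \<open>-Q = Q\<close> is used)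
  bound \<open>B\<close> by \<open>\<epsilon> M\<^sub>Q\<^sup>2\<close> on \<open>Q \<times> Q\<close>, and bilinearity extends this to
  \<open>\<bar>B x z\<bar> \<le> \<epsilon> M\<^sub>Q\<^sup>2 \<parallel>x\<parallel>\<^sub>Q \<parallel>z\<parallel>\<^sub>Q\<close> on \<open>span Q\<close>. For every admissible constant \<open>c\<close> this gives
  \<open>\<parallel>y\<parallel>\<^sup>2 \<le> \<epsilon> M\<^sub>Q\<^sup>2 c\<^sup>2 \<parallel>v\<parallel> \<parallel>y\<parallel>\<close>; dividing by \<open>\<parallel>y\<parallel>\<close> and taking the infimum over \<open>c\<close> proves
  the bound. That \<open>f\<^sup>*\<close> is a genuine adjoint on the Hilbert space \<open>V\<close> is the Riesz
  representation theorem, obtained from the vector of minimal norm on a closed hyperplane.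
\<close>

lemma parallelogram_law:
  fixes x y :: "'a::real_inner"
  shows "(norm (x + y))\<^sup>2 + (norm (x - y))\<^sup>2 = 2 * (norm x)\<^sup>2 + 2 * (norm y)\<^sup>2"
  by (simp add: power2_norm_eq_inner inner_add_left inner_add_right inner_diff_left inner_diff_right)

lemma polarization_identity:
  fixes x y :: "'a::real_inner"
  shows "(norm (x + y))\<^sup>2 - (norm (x - y))\<^sup>2 = 4 * (x \<bullet> y)"
  by (simp add: power2_norm_eq_inner inner_add_left inner_add_right inner_diff_left inner_diff_right
      inner_commute)

text \<open>The squared norms along a minimising sequence converge to their infimum, and the
  parallelogram law turns this into the Cauchy property.\<close>
lemma closed_convex_has_minimal_norm_point:
  fixes S :: "'a::{real_inner, complete_space} set"
  assumes "closed S" "convex S" "S \<noteq> {}"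
  obtains z where "z \<in> S" "\<And>y. y \<in> S \<Longrightarrow> norm z \<le> norm y"
proof -
  define T where "T = (\<lambda>x. (norm x)\<^sup>2) ` S"
  define d where "d = Inf T"
  have T: "T \<noteq> {}" "bdd_below T"
    using assms(3) unfolding T_def by (auto intro: bdd_belowI[where m = 0])
  have d_le: "d \<le> (norm y)\<^sup>2" if "y \<in> S" for y
    unfolding d_def using T(2) that by (auto intro: cInf_lower simp: T_def)
  obtain t where t: "\<And>n. t n \<in> T" "t \<longlonglongrightarrow> d"
    using closure_contains_Inf[OF T] unfolding d_def closure_sequential by blast
  have "\<forall>n. \<exists>y. y \<in> S \<and> (norm y)\<^sup>2 = t n"
  proof
    fix n
    from t(1)[of n] obtain y where "y \<in> S" "t n = (norm y)\<^sup>2"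
      unfolding T_def by blast
    then show "\<exists>y. y \<in> S \<and> (norm y)\<^sup>2 = t n" by auto
  qed
  then obtain x where x: "\<And>n. x n \<in> S" "\<And>n. (norm (x n))\<^sup>2 = t n"
    using choice[of "\<lambda>n y. y \<in> S \<and> (norm y)\<^sup>2 = t n"] by blast
  have dist_bound: "(dist (x m) (x n))\<^sup>2 \<le> 2 * (t m - d) + 2 * (t n - d)" for m n
  proof -
    have "(1/2) *\<^sub>R x m + (1/2) *\<^sub>R x n \<in> S"
      using assms(2) x(1) by (intro convexD) auto
    then have "d \<le> (norm ((1/2) *\<^sub>R (x m + x n)))\<^sup>2"
      using d_le by (simp add: scaleR_add_right)
    then have "4 * d \<le> (norm (x m + x n))\<^sup>2"
      by (simp add: power_mult_distrib power_divide)
    then show ?thesis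
      using parallelogram_law[of "x m" "x n"] x(2) by (simp add: dist_norm)
  qed
  have "Cauchy x"
  proof (rule metric_CauchyI)
    fix e :: real
    assume "e > 0"
    then have "eventually (\<lambda>n. t n < d + e\<^sup>2 / 4) sequentially"
      using t(2) by (intro order_tendstoD) auto
    then obtain N where N: "\<And>n. n \<ge> N \<Longrightarrow> t n < d + e\<^sup>2 / 4"
      unfolding eventually_sequentially by blast
    have "dist (x m) (x n) < e" if "m \<ge> N" "n \<ge> N" for m n
    proof (rule power_less_imp_less_base)
      show "(dist (x m) (x n))\<^sup>2 < e\<^sup>2"
        using dist_bound[of m n] N[OF that(1)] N[OF that(2)] by argo
    qed (use \<open>e > 0\<close> in simp)
    then show "\<exists>N. \<forall>m\<ge>N. \<forall>n\<ge>N. dist (x m) (x n) < e" by blast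
  qed
  then obtain z where z: "x \<longlonglongrightarrow> z"
    using convergent_eq_Cauchy by blast
  have "z \<in> S"
    using assms(1) x(1) z closed_sequential_limits by blast
  moreover have "(\<lambda>n. (norm (x n))\<^sup>2) \<longlonglongrightarrow> (norm z)\<^sup>2"
    by (intro tendsto_intros z)
  then have "(norm z)\<^sup>2 = d"
    using t(2) x(2) LIMSEQ_unique by simp
  ultimately show ?thesis
    using d_le that by (metis norm_ge_zero power2_le_imp_le)
qed

lemma quadratic_nonneg_imp_linear_coeff_zero:
  fixes s N :: real
  assumes "\<And>t. 0 \<le> t * s + t\<^sup>2 * N"
  shows "s = 0"
proof -
  define A where "A = \<bar>N\<bar> + 1"
  have A: "A > 0" "N \<le> A" unfolding A_def by auto
  define t where "t = - s / (2 * A)"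
  have "0 \<le> t * s + t\<^sup>2 * N" by (rule assms)
  also have "\<dots> \<le> t * s + t\<^sup>2 * A"
    using A by (simp add: mult_left_mono)
  also have "\<dots> = - s\<^sup>2 / (4 * A)"
    using A unfolding t_def by (simp add: field_simps power2_eq_square)
  finally have "s\<^sup>2 \<le> 0"
    using A by (simp add: divide_le_0_iff)
  then show ?thesis by simp
qed

text \<open>Riesz representation: the vector of minimal norm on the hyperplane \<open>\<phi> = 1\<close>
  is orthogonal to the kernel of \<open>\<phi>\<close>, hence a multiple of it represents \<open>\<phi>\<close>.\<close>
lemma bounded_linear_functional_representation:
  fixes \<phi> :: "'a::{real_inner, complete_space} \<Rightarrow> real"
  assumes "bounded_linear \<phi>"
  obtains w where "\<And>x. \<phi> x = x \<bullet> w"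
proof (cases "\<forall>x. \<phi> x = 0")
  case True
  then show ?thesis using that[of 0] by simp
next
  case False
  interpret \<phi>: bounded_linear \<phi> by fact
  obtain a where "\<phi> a \<noteq> 0" using False by blast
  define H where "H = \<phi> -` {1}"
  have "closed H"
    unfolding H_def by (intro continuous_closed_vimage) (auto intro: \<phi>.isCont)
  moreover have "convex H"
    unfolding H_def convex_def by (simp add: \<phi>.add \<phi>.scaleR)
  moreover have "(1 / \<phi> a) *\<^sub>R a \<in> H"
    unfolding H_def using \<open>\<phi> a \<noteq> 0\<close> by (simp add: \<phi>.scaleR)
  ultimately obtain z where "z \<in> H" and z_min: "\<And>y. y \<in> H \<Longrightarrow> norm z \<le> norm y"
    using closed_convex_has_minimal_norm_point by blast
  then have "\<phi> z = 1" unfolding H_def by simp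
  have orth: "z \<bullet> n = 0" if "\<phi> n = 0" for n
  proof -
    have "2 * (z \<bullet> n) = 0"
    proof (rule quadratic_nonneg_imp_linear_coeff_zero)
      fix t :: real
      have "z + t *\<^sub>R n \<in> H"
        unfolding H_def using \<open>\<phi> z = 1\<close> that by (simp add: \<phi>.add \<phi>.scaleR)
      then have "(norm z)\<^sup>2 \<le> (norm (z + t *\<^sub>R n))\<^sup>2"
        using z_min by (simp add: power_mono)
      moreover have "(norm (z + t *\<^sub>R n))\<^sup>2 = (norm z)\<^sup>2 + t * (2 * (z \<bullet> n)) + t\<^sup>2 * (norm n)\<^sup>2"
        unfolding power2_norm_eq_inner
        by (simp add: inner_add_left inner_add_right inner_commute power2_eq_square algebra_simps)
      ultimately show "0 \<le> t * (2 * (z \<bullet> n)) + t\<^sup>2 * (norm n)\<^sup>2"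
        by linarith
    qed
    then show ?thesis by simp
  qed
  have "z \<noteq> 0" using \<open>\<phi> z = 1\<close> by auto
  show ?thesis
  proof (rule that)
    fix x
    have "\<phi> (x - \<phi> x *\<^sub>R z) = 0"
      using \<open>\<phi> z = 1\<close> by (simp add: \<phi>.diff \<phi>.scaleR)
    then have "z \<bullet> (x - \<phi> x *\<^sub>R z) = 0"
      by (rule orth)
    then have "z \<bullet> x = \<phi> x * (z \<bullet> z)"
      by (simp add: inner_diff_right)
    then show "\<phi> x = x \<bullet> ((1 / (z \<bullet> z)) *\<^sub>R z)"
      using \<open>z \<noteq> 0\<close> by (simp add: inner_commute)
  qed
qed

lemma adjoint_works_bounded_linear:
  fixes f :: "'a::{real_inner, complete_space} \<Rightarrow> 'b::real_inner"
  assumes "bounded_linear f"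
  shows "f x \<bullet> y = x \<bullet> adjoint f y"
proof -
  have "\<forall>y. \<exists>w. \<forall>x. f x \<bullet> y = x \<bullet> w"
  proof
    fix y
    have "bounded_linear (\<lambda>x. f x \<bullet> y)"
      using bounded_linear_compose[OF bounded_linear_inner_left assms] .
    then show "\<exists>w. \<forall>x. f x \<bullet> y = x \<bullet> w"
      using bounded_linear_functional_representation by metis
  qed
  then obtain g where "\<forall>x y. f x \<bullet> y = x \<bullet> g y"
    by metis
  moreover from this have "adjoint f = g"
    by (rule adjoint_unique)
  ultimately show ?thesis by simp
qed

lemma span_obtain_nat_indexed_combination:
  assumes "v \<in> span Q"
  obtains I :: "nat set" and c u where "finite I" "\<forall>i\<in>I. u i \<in> Q" "(\<Sum>i\<in>I. c i *\<^sub>R u i) = v"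
proof -
  obtain T a where T: "finite T" "T \<subseteq> Q" "(\<Sum>x\<in>T. a x *\<^sub>R x) = v"
    using assms unfolding span_explicit by blast
  obtain h where h: "bij_betw h {0..<card T} T"
    using ex_bij_betw_nat_finite[OF T(1)] by blast
  have "(\<Sum>i\<in>{0..<card T}. a (h i) *\<^sub>R h i) = v"
    using sum.reindex_bij_betw[OF h, of "\<lambda>x. a x *\<^sub>R x"] T(3) by simp
  moreover have "\<forall>i\<in>{0..<card T}. h i \<in> Q"
    using h T(2) bij_betwE by blast
  ultimately show ?thesis
    using that[of "{0..<card T}" h "\<lambda>i. a (h i)"] by blast
qed

lemma le_mult_atomic_norm:
  assumes "v \<in> span Q" "0 \<le> K"
    and "\<And>I c u. finite (I :: nat set) \<Longrightarrow> \<forall>i\<in>I. u i \<in> Q \<Longrightarrow> (\<Sum>i\<in>I. c i *\<^sub>R u i) = v \<Longrightarrow>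
           b \<le> K * (\<Sum>i\<in>I. \<bar>c i\<bar>)"
  shows "b \<le> K * atomic_norm Q v"
proof -
  obtain I :: "nat set" and c u where rep: "finite I" "\<forall>i\<in>I. u i \<in> Q" "(\<Sum>i\<in>I. c i *\<^sub>R u i) = v"
    using span_obtain_nat_indexed_combination[OF assms(1)] .
  show ?thesis
  proof (cases "K = 0")
    case True
    then show ?thesis using assms(3)[OF rep] by simp
  next
    case False
    with assms(2) have "K > 0" by simp
    have "b / K \<le> atomic_norm Q v"
      unfolding atomic_norm_def
    proof (rule cInf_greatest)
      show "{(\<Sum>i\<in>I. \<bar>c i\<bar>) |I c u. finite (I :: nat set) \<and> (\<forall>i\<in>I. u i \<in> Q) \<and>
          (\<Sum>i\<in>I. c i *\<^sub>R u i) = v} \<noteq> {}"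
        using rep by blast
    qed (use assms(3) \<open>K > 0\<close> in \<open>auto simp: divide_le_eq mult.commute\<close>)
    then show ?thesis
      using \<open>K > 0\<close> by (simp add: divide_le_eq mult.commute)
  qed
qed

lemma atomic_norm_nonneg: "v \<in> span Q \<Longrightarrow> 0 \<le> atomic_norm Q v"
  using le_mult_atomic_norm[of v Q 1 0] by (simp add: sum_nonneg)

lemma bilinear_bound_on_combinations:
  fixes B :: "'a::real_vector \<Rightarrow> 'b::real_vector \<Rightarrow> real"
  assumes "bilinear B" and bound: "\<And>u w. u \<in> Q \<Longrightarrow> w \<in> R \<Longrightarrow> \<bar>B u w\<bar> \<le> K"
    and "\<forall>i\<in>I. u i \<in> Q" "\<forall>j\<in>J. w j \<in> R"
  shows "\<bar>B (\<Sum>i\<in>I. c i *\<^sub>R u i) (\<Sum>j\<in>J. d j *\<^sub>R w j)\<bar>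
    \<le> K * (\<Sum>i\<in>I. \<bar>c i\<bar>) * (\<Sum>j\<in>J. \<bar>d j\<bar>)"
proof -
  have "\<bar>B (\<Sum>i\<in>I. c i *\<^sub>R u i) (\<Sum>j\<in>J. d j *\<^sub>R w j)\<bar>
      = \<bar>\<Sum>(i, j)\<in>I \<times> J. c i * d j * B (u i) (w j)\<bar>"
    by (simp add: bilinear_sum[OF assms(1)] bilinear_lmul[OF assms(1)] bilinear_rmul[OF assms(1)]
        mult.assoc mult.left_commute)
  also have "\<dots> \<le> (\<Sum>(i, j)\<in>I \<times> J. \<bar>c i\<bar> * \<bar>d j\<bar> * K)"
  proof (rule order_trans[OF sum_abs sum_mono])
    fix p assume "p \<in> I \<times> J"
    then have "\<bar>B (u (fst p)) (w (snd p))\<bar> \<le> K"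
      using assms(3,4) bound by auto
    then show "\<bar>case p of (i, j) \<Rightarrow> c i * d j * B (u i) (w j)\<bar>
        \<le> (case p of (i, j) \<Rightarrow> \<bar>c i\<bar> * \<bar>d j\<bar> * K)"
      by (cases p) (simp add: abs_mult mult_left_mono)
  qed
  also have "\<dots> = K * (\<Sum>i\<in>I. \<bar>c i\<bar>) * (\<Sum>j\<in>J. \<bar>d j\<bar>)"
    by (simp add: sum.cartesian_product[symmetric] sum_product sum_distrib_left algebra_simps)
  finally show ?thesis .
qed

lemma bilinear_le_atomic_norm_mult:
  fixes B :: "'a::real_vector \<Rightarrow> 'b::real_vector \<Rightarrow> real"
  assumes "bilinear B" and bound: "\<And>u w. u \<in> Q \<Longrightarrow> w \<in> R \<Longrightarrow> \<bar>B u w\<bar> \<le> K" and "0 \<le> K"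
    and x: "x \<in> span Q" and y: "y \<in> span R"
  shows "\<bar>B x y\<bar> \<le> K * atomic_norm Q x * atomic_norm R y"
proof -
  have x_bound: "\<bar>B x y\<bar> \<le> (K * (\<Sum>j\<in>J. \<bar>d j\<bar>)) * atomic_norm Q x"
    if J: "finite (J :: nat set)" "\<forall>j\<in>J. w j \<in> R" "(\<Sum>j\<in>J. d j *\<^sub>R w j) = y" for J d w
  proof (rule le_mult_atomic_norm[OF x])
    show "0 \<le> K * (\<Sum>j\<in>J. \<bar>d j\<bar>)"
      using \<open>0 \<le> K\<close> by (simp add: sum_nonneg)
    fix I :: "nat set" and c u
    assume "finite I" "\<forall>i\<in>I. u i \<in> Q" "(\<Sum>i\<in>I. c i *\<^sub>R u i) = x"
    then show "\<bar>B x y\<bar> \<le> K * (\<Sum>j\<in>J. \<bar>d j\<bar>) * (\<Sum>i\<in>I. \<bar>c i\<bar>)"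
      using bilinear_bound_on_combinations[of B Q R K I u J w c d] assms(1) bound J
      by (simp add: algebra_simps)
  qed
  have "\<bar>B x y\<bar> \<le> (K * atomic_norm Q x) * atomic_norm R y"
  proof (rule le_mult_atomic_norm[OF y])
    show "0 \<le> K * atomic_norm Q x"
      using \<open>0 \<le> K\<close> atomic_norm_nonneg[OF x] by simp
  qed (use x_bound in \<open>simp add: algebra_simps\<close>)
  then show ?thesis by simp
qed

lemma JL_property_deviation:
  assumes "JL_property f Q eps" "v1 \<in> Q" "v2 \<in> Q"
  shows "\<bar>(norm (f v1 - f v2))\<^sup>2 - (norm (v1 - v2))\<^sup>2\<bar> \<le> eps * (norm (v1 - v2))\<^sup>2"
  using assms unfolding JL_property_def abs_le_iff by (simp add: algebra_simps)

lemma JL_property_inner_deviation: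
  fixes f :: "'a::real_inner \<Rightarrow> 'b::real_inner"
  assumes "linear f" "uminus ` Q = Q" "JL_property f Q eps" "0 \<le> eps"
    and M: "\<And>u. u \<in> Q \<Longrightarrow> norm u \<le> M"
    and u1: "u1 \<in> Q" and u2: "u2 \<in> Q"
  shows "\<bar>u1 \<bullet> u2 - f u1 \<bullet> f u2\<bar> \<le> eps * M\<^sup>2"
proof -
  have "- u2 \<in> Q" using imageI[OF u2, of uminus] assms(2) by simp
  from JL_property_deviation[OF assms(3) u1 this]
  have plus: "\<bar>(norm (f u1 + f u2))\<^sup>2 - (norm (u1 + u2))\<^sup>2\<bar> \<le> eps * (norm (u1 + u2))\<^sup>2"
    by (simp add: linear_neg[OF assms(1)])
  have minus: "\<bar>(norm (f u1 - f u2))\<^sup>2 - (norm (u1 - u2))\<^sup>2\<bar> \<le> eps * (norm (u1 - u2))\<^sup>2"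
    using JL_property_deviation[OF assms(3) u1 u2] .
  have "4 * \<bar>u1 \<bullet> u2 - f u1 \<bullet> f u2\<bar> = \<bar>4 * (u1 \<bullet> u2 - f u1 \<bullet> f u2)\<bar>"
    unfolding abs_mult by simp
  also have "\<dots> = \<bar>((norm (u1 + u2))\<^sup>2 - (norm (u1 - u2))\<^sup>2) - ((norm (f u1 + f u2))\<^sup>2 - (norm (f u1 - f u2))\<^sup>2)\<bar>"
    by (simp only: right_diff_distrib polarization_identity)
  also have "\<dots> = \<bar>((norm (f u1 + f u2))\<^sup>2 - (norm (u1 + u2))\<^sup>2) - ((norm (f u1 - f u2))\<^sup>2 - (norm (u1 - u2))\<^sup>2)\<bar>"
    by (simp add: algebra_simps)
  also have "\<dots> \<le> eps * (norm (u1 + u2))\<^sup>2 + eps * (norm (u1 - u2))\<^sup>2"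
    using abs_triangle_ineq4 plus minus by (rule order_trans[OF _ add_mono])
  also have "\<dots> = eps * (2 * (norm u1)\<^sup>2 + 2 * (norm u2)\<^sup>2)"
    by (simp only: parallelogram_law flip: distrib_left)
  also have "\<dots> \<le> eps * (4 * M\<^sup>2)"
  proof (rule mult_left_mono[OF _ \<open>0 \<le> eps\<close>])
    have "(norm u1)\<^sup>2 \<le> M\<^sup>2" "(norm u2)\<^sup>2 \<le> M\<^sup>2"
      using M[OF u1] M[OF u2] by (simp_all add: power_mono)
    then show "2 * (norm u1)\<^sup>2 + 2 * (norm u2)\<^sup>2 \<le> 4 * M\<^sup>2" by linarith
  qed
  finally show ?thesis by simp
qed

lemma norm_le_MQ: "bounded Q \<Longrightarrow> u \<in> Q \<Longrightarrow> norm u \<le> MQ Q"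
  unfolding MQ_def bounded_iff by (auto intro!: cSup_upper bdd_aboveI)

text \<open>The hypothesis \<open>0 < a\<close> cannot be dropped: \<open>0 * \<infinity> = 0\<close> for extended reals.\<close>
lemma ereal_le_mult_Inf_square:
  fixes r a :: real and C :: "real set"
  assumes "0 < a" and nonneg: "\<And>c. c \<in> C \<Longrightarrow> 0 \<le> c" and bound: "\<And>c. c \<in> C \<Longrightarrow> r \<le> a * c\<^sup>2"
  shows "ereal r \<le> ereal a * (Inf (ereal ` C))\<^sup>2"
proof -
  define s where "s = sqrt (r / a)"
  have "s \<le> c" if "c \<in> C" for c
  proof -
    have "r / a \<le> c\<^sup>2"
      using bound[OF that] \<open>0 < a\<close> by (simp add: divide_le_eq mult.commute)
    then have "s \<le> sqrt (c\<^sup>2)"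
      unfolding s_def by (rule real_sqrt_le_mono)
    then show ?thesis using nonneg[OF that] by simp
  qed
  then have s_le: "ereal s \<le> Inf (ereal ` C)"
    by (auto intro: Inf_greatest)
  show ?thesis
  proof (cases "Inf (ereal ` C)")
    case (real c)
    have "r \<le> a * c\<^sup>2"
    proof (cases "0 \<le> r")
      case True
      then have "r = a * s\<^sup>2" "0 \<le> s"
        unfolding s_def using \<open>0 < a\<close> by simp_all
      moreover have "s \<le> c" using s_le real by simp
      ultimately show ?thesis
        using \<open>0 < a\<close> by (simp add: power_mono)
    next
      case False
      moreover have "0 \<le> a * c\<^sup>2" using \<open>0 < a\<close> by simp
      ultimately show ?thesis by simp
    qed
    then show ?thesis using real by simp
  next
    case PInf
    then show ?thesis using \<open>0 < a\<close> by simp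
  next
    case MInf
    then show ?thesis using s_le by simp
  qed
qed

lemma adjoint_residual_norm_square_le:
  fixes f :: "'a::{real_inner, complete_space} \<Rightarrow> 'b::real_inner"
  assumes "bounded_linear f" and bound: "\<And>u w. u \<in> Q \<Longrightarrow> w \<in> Q \<Longrightarrow> \<bar>u \<bullet> w - f u \<bullet> f w\<bar> \<le> K"
    and "0 \<le> K" and v: "v \<in> span Q" and "adjoint f (f v) \<in> span Q"
  defines "y \<equiv> v - adjoint f (f v)"
  shows "(norm y)\<^sup>2 \<le> K * atomic_norm Q v * atomic_norm Q y"
proof -
  interpret f: bounded_linear f by fact
  have "y \<in> span Q"
    unfolding y_def using v assms(5) by (rule span_diff)
  have "bilinear (\<lambda>x z. x \<bullet> z - f x \<bullet> f z)"
    unfolding bilinear_def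
    by (auto intro!: linearI simp: inner_add_left inner_add_right f.add f.scaleR algebra_simps)
  from bilinear_le_atomic_norm_mult[OF this bound \<open>0 \<le> K\<close> v \<open>y \<in> span Q\<close>]
  have "\<bar>v \<bullet> y - f v \<bullet> f y\<bar> \<le> K * atomic_norm Q v * atomic_norm Q y" .
  moreover have "(norm y)\<^sup>2 = v \<bullet> y - f v \<bullet> f y"
    using adjoint_works_bounded_linear[OF assms(1), of y "f v"]
    by (simp add: power2_norm_eq_inner y_def inner_diff_left inner_commute)
  ultimately show ?thesis by simp
qed

lemma adjoint_residual_norm_le:
  fixes f :: "'a::{real_inner, complete_space} \<Rightarrow> 'b::real_inner"
  assumes "bounded_linear f" and "\<And>u w. u \<in> Q \<Longrightarrow> w \<in> Q \<Longrightarrow> \<bar>u \<bullet> w - f u \<bullet> f w\<bar> \<le> K"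
    and "0 \<le> K" and v: "v \<in> span Q" and "adjoint f (f v) \<in> span Q"
    and "0 \<le> c" and c: "\<forall>x\<in>span Q. atomic_norm Q x \<le> c * norm x"
  shows "norm (v - adjoint f (f v)) \<le> K * c\<^sup>2 * norm v"
proof -
  define y where "y = v - adjoint f (f v)"
  have "y \<in> span Q"
    unfolding y_def using v assms(5) by (rule span_diff)
  have "(norm y)\<^sup>2 \<le> K * atomic_norm Q v * atomic_norm Q y"
    unfolding y_def by (rule adjoint_residual_norm_square_le[OF assms(1-5)])
  also have "\<dots> \<le> K * (c * norm v) * (c * norm y)"
    using c v \<open>y \<in> span Q\<close> \<open>0 \<le> K\<close> \<open>0 \<le> c\<close> atomic_norm_nonneg[OF v] atomic_norm_nonneg[OF \<open>y \<in> span Q\<close>]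
    by (intro mult_mono mult_left_mono) auto
  finally have "norm y * norm y \<le> (K * c\<^sup>2 * norm v) * norm y"
    by (simp add: power2_eq_square algebra_simps)
  then have "norm y \<le> K * c\<^sup>2 * norm v"
    using \<open>0 \<le> K\<close> by (cases "norm y = 0") simp_all
  then show ?thesis unfolding y_def .
qed

theorem mainTheorem7:
  fixes Q :: "'a::{real_inner, complete_space} set"
    and f :: "'a \<Rightarrow> 'b::euclidean_space"
    and eps :: real
  assumes "bounded Q"
    and "uminus ` Q = Q"
    and "bounded_linear f"
    and "eps > 0"
    and "JL_property f Q eps"
  shows "\<forall>v\<in>span Q. adjoint f (f v) \<in> span Q \<longrightarrow>
    ereal (norm (v - adjoint f (f v))) \<le> ereal (eps * (MQ Q)\<^sup>2 * norm v) * (CQ Q)\<^sup>2"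
proof (intro ballI impI)
  fix v assume v: "v \<in> span Q" and adj_v: "adjoint f (f v) \<in> span Q"
  define K where "K = eps * (MQ Q)\<^sup>2"
  define C where "C = {c. 0 \<le> c \<and> (\<forall>x\<in>span Q. atomic_norm Q x \<le> c * norm x)}"
  have K: "\<bar>u \<bullet> w - f u \<bullet> f w\<bar> \<le> K" if "u \<in> Q" "w \<in> Q" for u w
    unfolding K_def using assms(2-5) that norm_le_MQ[OF assms(1)]
    by (intro JL_property_inner_deviation) (auto simp: bounded_linear.linear)
  have "0 \<le> K" unfolding K_def using assms(4) by simp
  show "ereal (norm (v - adjoint f (f v))) \<le> ereal (K * norm v) * (CQ Q)\<^sup>2"
  proof (cases "K * norm v = 0")
    case True
    have "adjoint f 0 = 0"
      using adjoint_works_bounded_linear[OF assms(3), of "adjoint f 0" 0] by simp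
    then have "v - adjoint f (f v) = 0"
      using True adjoint_residual_norm_square_le[OF assms(3) K \<open>0 \<le> K\<close> v adj_v]
      by (auto simp: bounded_linear.linear[OF assms(3)] linear_0)
    then show ?thesis unfolding True by (simp flip: zero_ereal_def)
  next
    case False
    then have "0 < K * norm v" using \<open>0 \<le> K\<close> by (simp add: less_le)
    moreover have "norm (v - adjoint f (f v)) \<le> K * norm v * c\<^sup>2" if "c \<in> C" for c
      using adjoint_residual_norm_le[OF assms(3) K \<open>0 \<le> K\<close> v adj_v] that
      unfolding C_def by (simp add: algebra_simps)
    ultimately show ?thesis
      unfolding CQ_def C_def[symmetric] by (intro ereal_le_mult_Inf_square) (auto simp: C_def)
  qed
qed

end
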